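(* Let $\mathcal{L}:\mathbb{R}^d\to\mathbb{R}$ be differentiable with $\nabla\mathcal{L}$ Lipschitz continuous with constant $L$. Run full-batch MoFO with $\beta_1<\sqrt{\beta_2}<1$, $\epsilon=0$ and learning rates $\eta_t=\eta/\sqrt{t}$ ($\eta>0$). Then for all iterations $t\ge s\ge1$ and every coordinate $i$, $$|g_{i,t}-g_{i,s}|\le\|g_t-g_s\|_2\le\frac{2\sqrt2\,LC\eta\,(t-s)}{\sqrt t},$$ where $C=\dfrac{\sqrt{d\cdot(\alpha\%)+B}}{\sqrt{1-\beta_2}\,(1-\beta_1/\sqrt{\beta_2})}$.
   Context: The coordinates of $\mathbb{R}^d$ are partitioned into $B$ blocks of sizes $d_1,\dots,d_B$ with $\sum_kd_k=d$. Fix $\alpha\%\in(0,1]$. For $z\in\mathbb{R}^d$, $\texttt{FLT}_\alpha(z)\in\{0,1\}^d$ equals, in each block $k$, $1$ exactly on a set of $\lceil d_k\cdot\alpha\%\rceil$ indices with the largest absolute values of $z$ within that block (ties broken in favour of smaller indices), and $0$ elsewhere. Full-batch MoFO with $\beta_1,\beta_2\in(0,1)$, learning rates $\eta_t>0$, initial point $\theta_0$: $m_0=v_0=0$; for $t\ge1$, $g_t=\nabla\mathcal{L}(\theta_{t-1})$, $m_t=\beta_1m_{t-1}+(1-\beta_1)g_t$, $v_t=\beta_2v_{t-1}+(1-\beta_2)g_t\odot g_t$, $\hat m_t=m_t/(1-\beta_1^t)$, $\hat v_t=v_t/(1-\beta_2^t)$, $\theta_t=\theta_{t-1}-\eta_t(\hat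 m_t\odot\texttt{FLT}_\alpha(m_t))/\sqrt{\hat v_t}$ entrywise ($\epsilon=0$: no additive constant in the denominator; a quotient with $\hat v_{i,t}=0$ is taken as $0$). $g_{i,t}$ denotes the $i$-th coordinate of $g_t$. *)

theory Defs
  imports "HOL-Analysis.Analysis"
begin

text \<open>Coordinates are indexed by a finite linearly ordered type ('n::{finite,linorder}), so vectors
  in R^d are real^('n::{finite,linorder}) with d = CARD(('n::{finite,linorder})).\<close>

definition block_of :: "(('n::{finite,linorder}) \<Rightarrow> nat) \<Rightarrow> nat \<Rightarrow> ('n::{finite,linorder}) set" where
  "block_of blk k = {j. blk j = k}"

definition beats :: "real^('n::{finite,linorder}) \<Rightarrow> ('n::{finite,linorder}) \<Rightarrow> ('n::{finite,linorder}) \<Rightarrow> bool" where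
  "beats z j i \<longleftrightarrow> \<bar>z$j\<bar> > \<bar>z$i\<bar> \<or> (\<bar>z$j\<bar> = \<bar>z$i\<bar> \<and> j < i)"

text \<open>FLT: within each block k, coordinate i is selected iff fewer than
  ceil(d_k * alpha) coordinates of its block beat it, i.e. i is among the
  ceil(d_k * alpha) top entries (largest absolute value, ties to smaller index).\<close>
definition FLT :: "(('n::{finite,linorder}) \<Rightarrow> nat) \<Rightarrow> real \<Rightarrow> real^('n::{finite,linorder}) \<Rightarrow> real^('n::{finite,linorder})" where
  "FLT blk alpha z = (\<chi> i.
     if card {j \<in> block_of blk (blk i). beats z j i}
          < nat \<lceil>real (card (block_of blk (blk i))) * alpha\<rceil>
     then 1 else 0)"

text \<open>Full-batch MoFO state (theta_t, m_t, v_t); G is the gradient of the loss,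
  lr t = eta_t. Quotients with zero denominator are 0 (epsilon = 0).\<close>
fun mofo :: "(real^('n::{finite,linorder}) \<Rightarrow> real^('n::{finite,linorder})) \<Rightarrow> (('n::{finite,linorder}) \<Rightarrow> nat) \<Rightarrow> real \<Rightarrow> real \<Rightarrow> real
              \<Rightarrow> (nat \<Rightarrow> real) \<Rightarrow> real^('n::{finite,linorder}) \<Rightarrow> nat \<Rightarrow> (real^('n::{finite,linorder})) \<times> (real^('n::{finite,linorder})) \<times> (real^('n::{finite,linorder}))" where
  "mofo G blk alpha b1 b2 lr th0 0 = (th0, 0, 0)"
| "mofo G blk alpha b1 b2 lr th0 (Suc t) =
     (let (th, m, v) = mofo G blk alpha b1 b2 lr th0 t;
          g = G th;
          m' = b1 *\<^sub>R m + (1 - b1) *\<^sub>R g;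
          v' = b2 *\<^sub>R v + (1 - b2) *\<^sub>R (\<chi> i. (g$i)^2);
          mh = (1 / (1 - b1 ^ Suc t)) *\<^sub>R m';
          vh = (1 / (1 - b2 ^ Suc t)) *\<^sub>R v';
          msk = FLT blk alpha m';
          th' = th - (\<chi> i. if vh$i = 0 then 0
                           else lr (Suc t) * (mh$i * msk$i) / sqrt (vh$i))
      in (th', m', v'))"

definition mofo_grad :: "(real^('n::{finite,linorder}) \<Rightarrow> real^('n::{finite,linorder})) \<Rightarrow> (('n::{finite,linorder}) \<Rightarrow> nat) \<Rightarrow> real \<Rightarrow> real \<Rightarrow> real
              \<Rightarrow> (nat \<Rightarrow> real) \<Rightarrow> real^('n::{finite,linorder}) \<Rightarrow> nat \<Rightarrow> real^('n::{finite,linorder})" where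
  "mofo_grad G blk alpha b1 b2 lr th0 t = G (fst (mofo G blk alpha b1 b2 lr th0 (t - 1)))"

end

theory Submission
  imports Defs
begin

text \<open>The second moment controls the first: with K = 1 / (sqrt (1 - b2) * (1 - b1 / sqrt b2)),
  induction on t gives |m_t| <= (1 - b1) K sqrt v_t coordinatewise, since b1 < sqrt b2 makes this
  constant a fixed point of the moment recursions. After bias correction every MoFO update therefore
  moves a coordinate by at most eta_t K, and only the at most d alpha + B coordinates selected by the
  filter move at all, so |theta_t - theta_(t-1)| <= eta_t K sqrt (d alpha + B). Telescoping with
  sum_(k=s..t-1) 1 / sqrt k <= 2 sqrt 2 (t - s) / sqrt t and the Lipschitz bound on the gradient
  give the claim.\<close>

lemma inverse_sqrt_Suc_le:
  fixes x :: real
  assumes "0 \<le> x"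
  shows "1 / sqrt (x + 1) \<le> 2 * (sqrt (x + 1) - sqrt x)"
proof -
  define a b where "a = sqrt (x + 1)" and "b = sqrt x"
  have a: "0 < a" and b: "0 \<le> b" "b \<le> a"
    using assms by (simp_all add: a_def b_def)
  have "(a - b) * (a + b) = 1"
    using assms by (simp add: a_def b_def algebra_simps)
  then have "a - b = 1 / (a + b)"
    using a b by (simp add: eq_divide_eq)
  moreover have "1 / (2 * a) \<le> 1 / (a + b)"
    using a b by (intro divide_left_mono) auto
  ultimately show ?thesis
    unfolding a_def[symmetric] b_def[symmetric] using a by simp
qed

lemma sum_inverse_sqrt_le_sqrt_diff:
  assumes "s \<le> t"
  shows "(\<Sum>k=s..<t. 1 / sqrt (real (Suc k))) \<le> 2 * (sqrt (real t) - sqrt (real s))"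
proof -
  have "(\<Sum>k=s..<t. 1 / sqrt (real (Suc k))) \<le> (\<Sum>k=s..<t. 2 * (sqrt (real (Suc k)) - sqrt (real k)))"
  proof (rule sum_mono)
    fix k
    show "1 / sqrt (real (Suc k)) \<le> 2 * (sqrt (real (Suc k)) - sqrt (real k))"
      using inverse_sqrt_Suc_le[of "real k"] by (simp add: add.commute)
  qed
  also have "\<dots> = 2 * (\<Sum>k=s..<t. sqrt (real (Suc k)) - sqrt (real k))"
    by (simp only: sum_distrib_left)
  also have "\<dots> = 2 * (sqrt (real t) - sqrt (real s))"
    using sum_Suc_diff'[OF assms, of "\<lambda>k. sqrt (real k)"] by simp
  finally show ?thesis .
qed

lemma sqrt_diff_le:
  fixes x y :: real
  assumes "0 \<le> x" "x \<le> y"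
  shows "sqrt y - sqrt x \<le> (y - x) / sqrt y"
proof -
  have "x \<le> sqrt x * sqrt y"
    using assms mult_left_mono[of "sqrt x" "sqrt y" "sqrt x"] by simp
  then have "(sqrt y - sqrt x) * sqrt y \<le> y - x"
    using assms by (simp add: algebra_simps)
  then show ?thesis
    using assms by (cases "y = 0") (simp_all add: le_divide_eq)
qed

lemma sum_inverse_sqrt_le:
  assumes "s \<le> t"
  shows "(\<Sum>k=s..<t. 1 / sqrt (real (Suc k))) \<le> 2 * sqrt 2 * real (t - s) / sqrt (real (Suc t))"
proof (cases "s = t")
  case False
  then have t: "1 \<le> t" using assms by simp
  have "sqrt (real (Suc t)) \<le> sqrt 2 * sqrt (real t)"
    unfolding real_sqrt_mult[symmetric] using t by (intro real_sqrt_le_mono) simp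
  then have inv_le: "1 / sqrt (real t) \<le> sqrt 2 / sqrt (real (Suc t))"
    using t by (simp add: field_simps)
  have "(\<Sum>k=s..<t. 1 / sqrt (real (Suc k))) \<le> 2 * (sqrt (real t) - sqrt (real s))"
    by (rule sum_inverse_sqrt_le_sqrt_diff[OF assms])
  also have "\<dots> \<le> 2 * (real (t - s) * (1 / sqrt (real t)))"
    using sqrt_diff_le[of "real s" "real t"] assms by (intro mult_left_mono) simp_all
  also have "\<dots> \<le> 2 * (real (t - s) * (sqrt 2 / sqrt (real (Suc t))))"
    using inv_le by (intro mult_left_mono) auto
  finally show ?thesis by (simp add: mult_ac)
qed simp

lemma norm_diff_le_sum_steps:
  fixes x :: "nat \<Rightarrow> 'a::real_normed_vector"
  assumes "s \<le> t" "\<And>k. s \<le> k \<Longrightarrow> k < t \<Longrightarrow> norm (x (Suc k) - x k) \<le> a k"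
  shows "norm (x t - x s) \<le> (\<Sum>k=s..<t. a k)"
proof -
  have "norm (x t - x s) = norm (\<Sum>k=s..<t. x (Suc k) - x k)"
    by (simp add: sum_Suc_diff'[OF assms(1)])
  also have "\<dots> \<le> (\<Sum>k=s..<t. norm (x (Suc k) - x k))"
    by (rule norm_sum)
  also have "\<dots> \<le> (\<Sum>k=s..<t. a k)"
    by (intro sum_mono) (simp add: assms(2))
  finally show ?thesis .
qed

lemma lipschitz_constant_nonneg:
  fixes G :: "'a::euclidean_space \<Rightarrow> 'b::real_normed_vector"
  assumes "\<And>x y. norm (G x - G y) \<le> L * norm (x - y)"
  shows "0 \<le> L"
proof -
  obtain b :: 'a where b: "b \<in> Basis"
    using nonempty_Basis by blast
  have "0 \<le> norm (G b - G 0)"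
    by simp
  also have "\<dots> \<le> L"
    using assms[of b 0] b by simp
  finally show ?thesis .
qed

lemma norm_le_sqrt_sum_mask:
  fixes x f :: "real^'n"
  assumes mask: "\<And>i. f $ i \<in> {0, 1}" and c: "0 \<le> c" and x: "\<And>i. \<bar>x $ i\<bar> \<le> c * f $ i"
  shows "norm x \<le> c * sqrt (\<Sum>i\<in>UNIV. f $ i)"
proof -
  have "(x $ i)\<^sup>2 \<le> c\<^sup>2 * f $ i" for i
    using mask[of i] x[of i] abs_le_square_iff[of "x $ i" c] by auto
  then have "(\<Sum>i\<in>UNIV. (x $ i)\<^sup>2) \<le> c\<^sup>2 * (\<Sum>i\<in>UNIV. f $ i)"
    by (simp add: sum_distrib_left sum_mono)
  then have "norm x \<le> sqrt (c\<^sup>2 * (\<Sum>i\<in>UNIV. f $ i))"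
    by (simp add: norm_vec_def L2_set_def)
  also have "\<dots> = c * sqrt (\<Sum>i\<in>UNIV. f $ i)"
    using c by (simp add: real_sqrt_mult)
  finally show ?thesis .
qed

lemma beats_trans: "beats z a b \<Longrightarrow> beats z b c \<Longrightarrow> beats z a c"
  unfolding beats_def by auto

lemma beats_irrefl: "\<not> beats z a a"
  unfolding beats_def by auto

lemma beats_total: "a \<noteq> b \<Longrightarrow> beats z a b \<or> beats z b a"
  unfolding beats_def by (auto simp: not_less_iff_gr_or_eq)

lemma card_beaten_less:
  assumes "beats z j i" "j \<in> A"
  shows "card {k \<in> A. beats z k j} < card {k \<in> A. beats z k i}"
proof (rule psubset_card_mono)
  show "finite {k \<in> A. beats z k i}" by simp
  show "{k \<in> A. beats z k j} \<subset> {k \<in> A. beats z k i}"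
    using assms beats_trans[of z _ j i] beats_irrefl[of z j] by blast
qed

lemma card_top_ranked_le:
  "card {i \<in> A. card {j \<in> A. beats z j i} < K} \<le> K"
proof -
  let ?rank = "\<lambda>i. card {j \<in> A. beats z j i}"
  have "inj_on ?rank {i \<in> A. ?rank i < K}"
  proof (rule inj_onI)
    fix a b
    assume "a \<in> {i \<in> A. ?rank i < K}" "b \<in> {i \<in> A. ?rank i < K}" "?rank a = ?rank b"
    then show "a = b"
      using beats_total[of a b z] card_beaten_less[of z a b A] card_beaten_less[of z b a A] by force
  qed
  moreover have "?rank ` {i \<in> A. ?rank i < K} \<subseteq> {..<K}"
    by auto
  ultimately show ?thesis
    using card_inj_on_le[of ?rank _ "{..<K}"] by fastforce
qed

lemma FLT_01: "FLT blk alpha z $ i \<in> {0, 1}"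
  unfolding FLT_def by auto

lemma sum_FLT_block_le:
  assumes "0 \<le> alpha"
  shows "(\<Sum>i\<in>block_of blk k. FLT blk alpha z $ i) \<le> real (card (block_of blk k)) * alpha + 1"
proof -
  let ?A = "block_of blk k"
  let ?K = "nat \<lceil>real (card ?A) * alpha\<rceil>"
  have "(\<Sum>i\<in>?A. FLT blk alpha z $ i) = (\<Sum>i\<in>?A. if card {j \<in> ?A. beats z j i} < ?K then 1 else 0)"
    by (rule sum.cong) (auto simp: block_of_def FLT_def)
  also have "\<dots> = real (card {i \<in> ?A. card {j \<in> ?A. beats z j i} < ?K})"
    by (simp add: sum.If_cases Int_def)
  also have "\<dots> \<le> real ?K"
    using card_top_ranked_le[of ?A z ?K] by linarith
  also have "\<dots> \<le> real (card ?A) * alpha + 1"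
    using assms by simp
  finally show ?thesis .
qed

lemma sum_FLT_le:
  fixes blk :: "'n::{finite,linorder} \<Rightarrow> nat"
  assumes blocks: "\<And>j. blk j < B" and alpha: "0 \<le> alpha"
  shows "(\<Sum>i\<in>UNIV. FLT blk alpha z $ i) \<le> real CARD('n) * alpha + real B"
proof -
  have by_blocks: "(\<Sum>i\<in>UNIV. f i) = (\<Sum>k<B. \<Sum>i\<in>block_of blk k. f i)" for f :: "'n \<Rightarrow> real"
    using sum.group[of UNIV "{..<B}" blk f] blocks by (simp add: block_of_def image_subset_iff)
  have "(\<Sum>i\<in>UNIV. FLT blk alpha z $ i) \<le> (\<Sum>k<B. real (card (block_of blk k)) * alpha + 1)"
    unfolding by_blocks by (intro sum_mono sum_FLT_block_le alpha)
  also have "\<dots> = real CARD('n) * alpha + real B"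
    using by_blocks[of "\<lambda>_. 1"] by (simp add: sum.distrib sum_distrib_right)
  finally show ?thesis .
qed

lemma beta_bounds:
  assumes "0 \<le> b1" "b1 < sqrt b2" "sqrt b2 < 1"
  shows "b1 < 1" "0 < b2" "b2 < 1"
proof -
  show "b1 < 1"
    using assms by linarith
  have "0 < sqrt b2"
    using assms by linarith
  then show "0 < b2" "b2 < 1"
    using assms by simp_all
qed

definition update_ratio_bound :: "real \<Rightarrow> real \<Rightarrow> real" where
  "update_ratio_bound b1 b2 = 1 / (sqrt (1 - b2) * (1 - b1 / sqrt b2))"

lemma update_ratio_bound_pos:
  assumes "0 \<le> b1" "b1 < sqrt b2" "sqrt b2 < 1"
  shows "0 < update_ratio_bound b1 b2"
proof -
  have "0 < sqrt b2"
    using assms by linarith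
  then show ?thesis
    using assms beta_bounds[OF assms] by (simp add: update_ratio_bound_def)
qed

lemma momentum_bound_step:
  fixes b1 b2 m v g :: real
  defines "c \<equiv> (1 - b1) * update_ratio_bound b1 b2"
  assumes betas: "0 \<le> b1" "b1 < sqrt b2" "sqrt b2 < 1"
    and m: "\<bar>m\<bar> \<le> c * sqrt v" and v: "0 \<le> v"
  shows "\<bar>b1 * m + (1 - b1) * g\<bar> \<le> c * sqrt (b2 * v + (1 - b2) * g\<^sup>2)"
proof -
  define \<gamma> where "\<gamma> = b1 / sqrt b2"
  define W where "W = b2 * v + (1 - b2) * g\<^sup>2"
  have sb: "0 < sqrt b2"
    using betas by linarith
  have b1: "b1 < 1" and b2: "0 < b2" "b2 < 1"
    using beta_bounds[OF betas] by simp_all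
  have \<gamma>: "0 \<le> \<gamma>" "\<gamma> < 1"
    using betas sb by (auto simp: \<gamma>_def)
  have s1: "0 < sqrt (1 - b2)"
    using b2 by simp
  have c_nonneg: "0 \<le> c"
    using b1 update_ratio_bound_pos[OF betas] by (simp add: c_def)
  have "c * (1 - \<gamma>) = (1 - b1) / sqrt (1 - b2)"
    using \<gamma> s1 by (simp add: c_def update_ratio_bound_def \<gamma>_def[symmetric])
  then have c_fixpoint: "\<gamma> * c + (1 - b1) / sqrt (1 - b2) = c"
    by algebra
  have W_v: "sqrt b2 * sqrt v \<le> sqrt W"
    unfolding W_def real_sqrt_mult[symmetric] using b2 by (intro real_sqrt_le_mono) simp
  have W_g: "sqrt (1 - b2) * \<bar>g\<bar> \<le> sqrt W"
    unfolding W_def using b2 v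
    by (metis real_sqrt_abs real_sqrt_le_mono real_sqrt_mult le_add_same_cancel2
        mult_nonneg_nonneg less_imp_le)
  have "\<bar>b1 * m + (1 - b1) * g\<bar> \<le> b1 * \<bar>m\<bar> + (1 - b1) * \<bar>g\<bar>"
    using betas b1 abs_triangle_ineq[of "b1 * m" "(1 - b1) * g"] by (simp add: abs_mult)
  also have "b1 * \<bar>m\<bar> \<le> \<gamma> * c * (sqrt b2 * sqrt v)"
    using mult_left_mono[OF m betas(1)] sb by (simp add: \<gamma>_def)
  also have "\<dots> \<le> \<gamma> * c * sqrt W"
    using W_v \<gamma> c_nonneg by (simp add: mult_left_mono)
  also have "(1 - b1) * \<bar>g\<bar> = (1 - b1) / sqrt (1 - b2) * (sqrt (1 - b2) * \<bar>g\<bar>)"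
    using s1 by simp
  also have "\<dots> \<le> (1 - b1) / sqrt (1 - b2) * sqrt W"
    using W_g s1 b1 by (intro mult_left_mono) auto
  also have "\<gamma> * c * sqrt W + (1 - b1) / sqrt (1 - b2) * sqrt W = c * sqrt W"
    using c_fixpoint by (metis distrib_right)
  finally show ?thesis
    by (simp add: W_def)
qed

lemma bias_corrected_ratio_le:
  fixes b1 b2 m v :: real
  assumes betas: "0 \<le> b1" "b1 < sqrt b2" "sqrt b2 < 1"
    and m: "\<bar>m\<bar> \<le> (1 - b1) * update_ratio_bound b1 b2 * sqrt v" and v: "0 \<le> v"
    and n: "0 < n"
  shows "\<bar>m / (1 - b1 ^ n)\<bar> \<le> update_ratio_bound b1 b2 * sqrt (v / (1 - b2 ^ n))"
proof -
  let ?K = "update_ratio_bound b1 b2"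
  have b1: "b1 < 1" and b2: "0 < b2" "b2 < 1"
    using beta_bounds[OF betas] by simp_all
  have b1n: "b1 ^ n \<le> b1"
    using power_decreasing[of 1 n b1] b1 betas n by simp
  have b2n: "0 < 1 - b2 ^ n" "1 - b2 ^ n \<le> 1"
    using b2 n by (auto simp: power_less_one_iff)
  have K: "0 < ?K"
    by (rule update_ratio_bound_pos[OF betas])
  have "\<bar>m / (1 - b1 ^ n)\<bar> \<le> (1 - b1) / (1 - b1 ^ n) * (?K * sqrt v)"
    using m b1n b1 by (simp add: abs_divide divide_right_mono)
  also have "\<dots> \<le> ?K * sqrt v"
    using b1n b1 K v by (intro mult_left_le_one_le) auto
  also have "\<dots> \<le> ?K * sqrt (v / (1 - b2 ^ n))"
    using K v b2n by (intro mult_left_mono real_sqrt_le_mono) (auto simp: le_divide_eq mult_left_le)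
  finally show ?thesis .
qed

lemma masked_update_le:
  fixes lr f m v K :: real
  assumes "0 \<le> lr" "f \<in> {0, 1}" "0 \<le> K" and m: "\<bar>m\<bar> \<le> K * sqrt v" and v: "0 \<le> v"
  shows "\<bar>if v = 0 then 0 else lr * (m * f) / sqrt v\<bar> \<le> lr * K * f"
proof (cases "v = 0")
  case False
  have "\<bar>m\<bar> / sqrt v \<le> K"
    using m v False by (simp add: divide_le_eq)
  then have "lr * f * (\<bar>m\<bar> / sqrt v) \<le> lr * f * K"
    using assms(1,2) by (intro mult_left_mono) auto
  then show ?thesis
    using False v assms(1,2) by (auto simp: abs_mult abs_divide)
qed (use assms in auto)

context
  fixes G :: "real^('n::{finite,linorder}) \<Rightarrow> real^('n::{finite,linorder})"
    and blk :: "('n::{finite,linorder}) \<Rightarrow> nat" and alpha b1 b2 :: real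
    and lr :: "nat \<Rightarrow> real" and th0 :: "real^('n::{finite,linorder})"
  assumes betas: "0 \<le> b1" "b1 < sqrt b2" "sqrt b2 < 1"
begin

abbreviation "mofo_theta t \<equiv> fst (mofo G blk alpha b1 b2 lr th0 t)"
abbreviation "mofo_m t \<equiv> fst (snd (mofo G blk alpha b1 b2 lr th0 t))"
abbreviation "mofo_v t \<equiv> snd (snd (mofo G blk alpha b1 b2 lr th0 t))"

lemma mofo_moment_bound:
  "0 \<le> mofo_v t $ i \<and> \<bar>mofo_m t $ i\<bar> \<le> (1 - b1) * update_ratio_bound b1 b2 * sqrt (mofo_v t $ i)"
proof (induction t)
  case 0
  then show ?case by simp
next
  case (Suc t)
  obtain th m v where eq: "mofo G blk alpha b1 b2 lr th0 t = (th, m, v)"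
    by (cases "mofo G blk alpha b1 b2 lr th0 t") auto
  have "0 \<le> b2 * v $ i + (1 - b2) * (G th $ i)\<^sup>2"
    using Suc.IH beta_bounds[OF betas] by (simp add: eq)
  moreover have "\<bar>b1 * m $ i + (1 - b1) * G th $ i\<bar>
      \<le> (1 - b1) * update_ratio_bound b1 b2 * sqrt (b2 * v $ i + (1 - b2) * (G th $ i)\<^sup>2)"
    using Suc.IH by (intro momentum_bound_step[OF betas]) (simp_all add: eq)
  ultimately show ?case
    by (simp add: eq Let_def)
qed

lemma mofo_step_le:
  assumes lr: "0 \<le> lr (Suc t)"
  shows "\<bar>(mofo_theta (Suc t) - mofo_theta t) $ i\<bar>
    \<le> lr (Suc t) * update_ratio_bound b1 b2 * FLT blk alpha (mofo_m (Suc t)) $ i"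
proof -
  let ?n = "Suc t"
  let ?mh = "mofo_m ?n $ i / (1 - b1 ^ ?n)" and ?vh = "mofo_v ?n $ i / (1 - b2 ^ ?n)"
  obtain th m v where eq: "mofo G blk alpha b1 b2 lr th0 t = (th, m, v)"
    by (cases "mofo G blk alpha b1 b2 lr th0 t") auto
  have step: "(mofo_theta ?n - mofo_theta t) $ i = - (if ?vh = 0 then 0
      else lr ?n * (?mh * FLT blk alpha (mofo_m ?n) $ i) / sqrt ?vh)"
    by (simp add: eq Let_def)
  have ratio: "\<bar>?mh\<bar> \<le> update_ratio_bound b1 b2 * sqrt ?vh"
    using mofo_moment_bound[of ?n i]
    by (intro bias_corrected_ratio_le[OF betas]) auto
  have vh: "0 \<le> ?vh"
  proof (rule divide_nonneg_pos)
    show "0 \<le> mofo_v ?n $ i"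
      using mofo_moment_bound by blast
    show "0 < 1 - b2 ^ ?n"
      using power_Suc_less_one beta_bounds[OF betas] by simp
  qed
  show ?thesis
    unfolding step abs_minus_cancel
    by (rule masked_update_le[OF lr FLT_01 less_imp_le[OF update_ratio_bound_pos[OF betas]] ratio vh])
qed

lemma mofo_step_norm_le:
  assumes lr: "0 \<le> lr (Suc t)" and blocks: "\<And>j. blk j < B" and alpha: "0 \<le> alpha"
  shows "norm (mofo_theta (Suc t) - mofo_theta t)
    \<le> lr (Suc t) * update_ratio_bound b1 b2 * sqrt (real CARD('n) * alpha + real B)"
proof -
  have "norm (mofo_theta (Suc t) - mofo_theta t)
      \<le> lr (Suc t) * update_ratio_bound b1 b2 * sqrt (\<Sum>i\<in>UNIV. FLT blk alpha (mofo_m (Suc t)) $ i)"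
    using lr update_ratio_bound_pos[OF betas]
    by (intro norm_le_sqrt_sum_mask FLT_01 mofo_step_le) simp_all
  also have "\<dots> \<le> lr (Suc t) * update_ratio_bound b1 b2 * sqrt (real CARD('n) * alpha + real B)"
    using lr update_ratio_bound_pos[OF betas] sum_FLT_le[OF blocks alpha]
    by (intro mult_left_mono real_sqrt_le_mono) simp_all
  finally show ?thesis .
qed

lemma mofo_theta_dist_le:
  assumes lr: "\<And>k. 0 \<le> lr k" and blocks: "\<And>j. blk j < B" and alpha: "0 \<le> alpha"
    and "s \<le> t"
  shows "norm (mofo_theta t - mofo_theta s)
    \<le> (\<Sum>k=s..<t. lr (Suc k)) * update_ratio_bound b1 b2 * sqrt (real CARD('n) * alpha + real B)"
proof -
  have "norm (mofo_theta t - mofo_theta s)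
      \<le> (\<Sum>k=s..<t. lr (Suc k) * update_ratio_bound b1 b2 * sqrt (real CARD('n) * alpha + real B))"
    using \<open>s \<le> t\<close> mofo_step_norm_le[OF lr blocks alpha] by (rule norm_diff_le_sum_steps)
  then show ?thesis
    by (simp add: sum_distrib_right)
qed

end

theorem lemma3:
  fixes Lf :: "real^('n::{finite,linorder}) \<Rightarrow> real"
    and G :: "real^('n::{finite,linorder}) \<Rightarrow> real^('n::{finite,linorder})"
    and blk :: "('n::{finite,linorder}) \<Rightarrow> nat" and B :: nat
    and alpha b1 b2 eta Lc :: real and th0 :: "real^('n::{finite,linorder})"
    and s t :: nat and i :: "'n::{finite,linorder}"
  assumes grad: "\<And>x. (Lf has_derivative (\<lambda>h. G x \<bullet> h)) (at x)"
    and lip: "\<And>x y. norm (G x - G y) \<le> Lc * norm (x - y)"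
    and blocks: "\<And>j. blk j < B"
    and alpha: "0 < alpha" "alpha \<le> 1"
    and betas: "0 < b1" "b1 < sqrt b2" "sqrt b2 < 1" "0 < b2"
    and eta: "0 < eta"
    and st: "1 \<le> s" "s \<le> t"
  shows
    "let g = mofo_grad G blk alpha b1 b2 (\<lambda>k. eta / sqrt (real k)) th0;
         C = sqrt (real CARD(('n::{finite,linorder})) * alpha + real B) / (sqrt (1 - b2) * (1 - b1 / sqrt b2))
     in \<bar>g t $ i - g s $ i\<bar> \<le> norm (g t - g s)
        \<and> norm (g t - g s) \<le> 2 * sqrt 2 * Lc * C * eta * real (t - s) / sqrt (real t)"
proof -
  define lr where "lr = (\<lambda>k::nat. eta / sqrt (real k))"
  have lr_nonneg: "\<And>k. 0 \<le> lr k"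
    using eta by (simp add: lr_def)
  define g where "g = mofo_grad G blk alpha b1 b2 lr th0"
  let ?theta = "\<lambda>k. fst (mofo G blk alpha b1 b2 lr th0 k)"
  let ?K = "update_ratio_bound b1 b2" and ?S = "sqrt (real CARD('n) * alpha + real B)"
  obtain s' t' where s: "s = Suc s'" and t: "t = Suc t'"
    using st by (cases s; cases t) auto
  have st': "s' \<le> t'"
    using st s t by simp
  have betas': "0 \<le> b1" "b1 < sqrt b2" "sqrt b2 < 1"
    using betas by simp_all
  have K: "0 \<le> ?K"
    using update_ratio_bound_pos[OF betas'] by simp
  have Lc: "0 \<le> Lc"
    using lip by (rule lipschitz_constant_nonneg)
  have sum_lr: "(\<Sum>k=s'..<t'. lr (Suc k)) \<le> eta * (2 * sqrt 2 * real (t - s) / sqrt (real t))"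
    using mult_left_mono[OF sum_inverse_sqrt_le[OF st'], of eta] eta s t
    by (simp add: lr_def sum_distrib_left)
  \<comment> \<open>Only the Lipschitz bound on the gradient enters.\<close>
  have "norm (g t - g s) \<le> Lc * norm (?theta t' - ?theta s')"
    unfolding g_def mofo_grad_def s t by (simp add: lip)
  also have "\<dots> \<le> Lc * ((\<Sum>k=s'..<t'. lr (Suc k)) * ?K * ?S)"
    using mofo_theta_dist_le[OF betas' lr_nonneg blocks less_imp_le[OF alpha(1)] st'] Lc
    by (rule mult_left_mono)
  also have "\<dots> \<le> Lc * (eta * (2 * sqrt 2 * real (t - s) / sqrt (real t)) * ?K * ?S)"
    using sum_lr Lc K alpha by (intro mult_left_mono mult_right_mono) simp_all
  also have "\<dots> = 2 * sqrt 2 * Lc * (?S * ?K) * eta * real (t - s) / sqrt (real t)"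
    by (simp add: mult_ac)
  finally show ?thesis
    using component_le_norm_cart[of "g t - g s" i]
    by (simp add: g_def lr_def update_ratio_bound_def Let_def)
qed

end
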